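(* Let $n\ge 2$ and $q\ge 0$ be real. Let $A\in M_n(\mathbb{C})$ be normal and $B\in M_n(\mathbb{C})$ arbitrary. Then $$\|AB-qBA\|_F^2\le (1+q^2)\,\|A\|_{(2),2}^2\,\|B\|_F^2 .$$ The bound is sharp: equality holds for $A=\operatorname{diag}(1,-q,0,\dots,0)$ and $B$ the matrix whose only nonzero entry is $b_{12}=1$.
   Context: $\|X\|_F=\sqrt{\operatorname{tr}(XX^\dagger)}$ is the Frobenius norm. For $X\in M_n(\mathbb{C})$ with singular values $s_1\ge s_2\ge\cdots\ge s_n$, the Ky Fan $(2),2$ norm is $\|X\|_{(2),2}=\sqrt{s_1^2+s_2^2}$. *)

theory Defs
  imports "Jordan_Normal_Form.Schur_Decomposition" "Jordan_Normal_Form.Char_Poly"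
begin

definition mat_trace :: "complex mat \<Rightarrow> complex" where
  "mat_trace X = (\<Sum>i<dim_row X. X $$ (i, i))"

(* Frobenius norm: ||X||_F = sqrt(tr(X X^dagger)); the trace is real and nonnegative. *)
definition frob_norm :: "complex mat \<Rightarrow> real" where
  "frob_norm X = sqrt (Re (mat_trace (X * mat_adjoint X)))"

definition normal_mat :: "complex mat \<Rightarrow> bool" where
  "normal_mat A \<longleftrightarrow> A * mat_adjoint A = mat_adjoint A * A"

(* Singular values of a square matrix X, in non-increasing order, with multiplicity:
   the square roots of the eigenvalues (roots of the characteristic polynomial,
   counted with multiplicity) of X^dagger X, which are real and nonnegative. *)
definition singular_values :: "complex mat \<Rightarrow> real list" where
  "singular_values X =
     map sqrt (rev (sorted_list_of_multiset
       (image_mset Re (proots (char_poly (mat_adjoint X * X))))))"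

definition kyfan22_norm :: "complex mat \<Rightarrow> real" where
  "kyfan22_norm X = sqrt ((singular_values X ! 0)\<^sup>2 + (singular_values X ! 1)\<^sup>2)"

end

theory Submission
  imports Defs
begin

text \<open>
  For normal \<open>A\<close> the spectral theorem gives \<open>A = U D U\<^sup>*\<close> with \<open>U\<close> unitary and
  \<open>D = diag(\<lambda>\<^sub>1, \<dots>, \<lambda>\<^sub>n)\<close>; the singular values of \<open>A\<close> are then the
  \<open>|\<lambda>\<^sub>i|\<close>, so the squared Ky Fan \<open>(2),2\<close> norm of \<open>A\<close> is the sum of the two largest
  \<open>|\<lambda>\<^sub>i|\<^sup>2\<close>. With \<open>C = U\<^sup>* B U\<close>, the matrix \<open>AB - qBA\<close> is unitarily similar to
  \<open>DC - qCD\<close>, whose \<open>(i, j)\<close> entry is \<open>(\<lambda>\<^sub>i - q\<lambda>\<^sub>j) c\<^sub>i\<^sub>j\<close>, and the Frobenius norm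
  is unitarily invariant. For \<open>i \<noteq> j\<close>, Cauchy-Schwarz gives
  \<open>|\<lambda>\<^sub>i - q\<lambda>\<^sub>j|\<^sup>2 \<le> (1 + q\<^sup>2)(|\<lambda>\<^sub>i|\<^sup>2 + |\<lambda>\<^sub>j|\<^sup>2)\<close>, and for \<open>i = j\<close> the
  factor is \<open>(1 - q)\<^sup>2 \<le> 1 + q\<^sup>2\<close> because \<open>q \<ge> 0\<close>; summing over the entries of \<open>C\<close>
  gives the inequality.

  The spectral theorem is proved by deflation: completing an eigenvector to an orthonormal
  basis makes the first column of the conjugated matrix a multiple of the first unit vector,
  and normality (compare the upper left entries of \<open>AA\<^sup>*\<close> and \<open>A\<^sup>*A\<close>) forces the rest
  of the first row to vanish as well.
\<close>

section \<open>Adjoints and unitary matrices\<close>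

lemma dim_mat_adjoint [simp]:
  "dim_row (mat_adjoint A) = dim_col A" "dim_col (mat_adjoint A) = dim_row A"
  by (simp_all add: mat_adjoint_def)

lemma index_mat_adjoint [simp]:
  "i < dim_col A \<Longrightarrow> j < dim_row A \<Longrightarrow> mat_adjoint A $$ (i, j) = conjugate (A $$ (j, i))"
  by (simp add: mat_adjoint_def mat_of_rows_def)

lemma mat_adjoint_carrier [simp]: "A \<in> carrier_mat n m \<Longrightarrow> mat_adjoint A \<in> carrier_mat m n"
  unfolding carrier_mat_def by simp

lemma mat_adjoint_adjoint [simp]: "mat_adjoint (mat_adjoint A) = A"
  by (rule eq_matI) simp_all

lemma conjugate_one [simp]: "conjugate (1 :: 'a :: conjugatable_field) = 1"
proof -
  have "conjugate (1 :: 'a) * conjugate 1 = conjugate 1 * 1"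
    by (simp flip: conjugate_dist_mul)
  then show ?thesis
    using mult_left_cancel[of "conjugate (1 :: 'a)" "conjugate 1" 1] by simp
qed

lemma mat_adjoint_one [simp]: "mat_adjoint (1\<^sub>m n :: 'a :: conjugatable_field mat) = 1\<^sub>m n"
  by (rule eq_matI) simp_all

lemma mat_adjoint_mat_diag: "mat_adjoint (mat_diag n d) = mat_diag n (\<lambda>i. conjugate (d i))"
  by (rule eq_matI) (simp_all add: mat_diag_def)

lemma mat_adjoint_mult:
  fixes A :: "'a :: conjugatable_field mat"
  assumes A: "A \<in> carrier_mat n m" and B: "B \<in> carrier_mat m k"
  shows "mat_adjoint (A * B) = mat_adjoint B * mat_adjoint A"
proof (rule eq_matI)
  fix i j assume "i < dim_row (mat_adjoint B * mat_adjoint A)" "j < dim_col (mat_adjoint B * mat_adjoint A)"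
  with A B have i: "i < k" and j: "j < n"
    by auto
  have "mat_adjoint (A * B) $$ (i, j) = conjugate (\<Sum>l\<in>{0..<m}. A $$ (j, l) * B $$ (l, i))"
    using A B i j by (simp add: scalar_prod_def)
  also have "\<dots> = (\<Sum>l\<in>{0..<m}. conjugate (B $$ (l, i)) * conjugate (A $$ (j, l)))"
    by (simp add: sum_conjugate conjugate_dist_mul mult.commute)
  also have "\<dots> = row (mat_adjoint B) i \<bullet> col (mat_adjoint A) j"
    unfolding scalar_prod_def using A B i j by (intro sum.cong) auto
  also have "\<dots> = (mat_adjoint B * mat_adjoint A) $$ (i, j)"
    using A B i j by simp
  finally show "mat_adjoint (A * B) $$ (i, j) = (mat_adjoint B * mat_adjoint A) $$ (i, j)" .
qed (use A B in auto)

lemma mat_adjoint_conj: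
  fixes U :: "'a :: conjugatable_field mat"
  assumes "U \<in> carrier_mat n n" "X \<in> carrier_mat n n"
  shows "mat_adjoint (U * X * mat_adjoint U) = U * mat_adjoint X * mat_adjoint U"
  using assms by (simp add: mat_adjoint_mult[of _ n n _ n] assoc_mult_mat[of _ n n _ n _ n])

definition unitary :: "nat \<Rightarrow> 'a :: conjugatable_field mat \<Rightarrow> bool" where
  "unitary n U \<longleftrightarrow> U \<in> carrier_mat n n \<and> mat_adjoint U * U = 1\<^sub>m n"

lemma unitaryD:
  assumes "unitary n U"
  shows "U \<in> carrier_mat n n" "mat_adjoint U * U = 1\<^sub>m n" "U * mat_adjoint U = 1\<^sub>m n"
  using assms mat_mult_left_right_inverse[of "mat_adjoint U" n U] by (auto simp: unitary_def)

lemma unitary_cancel: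
  assumes "unitary n U" "Z \<in> carrier_mat n k"
  shows "mat_adjoint U * (U * Z) = Z" "U * (mat_adjoint U * Z) = Z"
  using assms unitaryD[OF assms(1)] by (simp_all flip: assoc_mult_mat[of _ n n _ n _ k])

lemma unitary_one: "unitary n (1\<^sub>m n)"
  by (simp add: unitary_def)

lemma unitary_adjoint:
  assumes "unitary n U"
  shows "unitary n (mat_adjoint U)"
  unfolding unitary_def using unitaryD[OF assms] by simp

lemma unitary_mult:
  assumes "unitary n U" "unitary n V"
  shows "unitary n (U * V)"
proof -
  note U = unitaryD[OF assms(1)] and V = unitaryD[OF assms(2)]
  have "mat_adjoint (U * V) * (U * V) = 1\<^sub>m n"
    using U V by (simp add: mat_adjoint_mult[of _ n n _ n] unitary_cancel[OF assms(1), of _ n]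
        assoc_mult_mat[of _ n n _ n _ n])
  with U V show ?thesis
    by (simp add: unitary_def)
qed

lemma unitary_conj_mult:
  assumes "unitary n U" "X \<in> carrier_mat n n" "Y \<in> carrier_mat n n"
  shows "(U * X * mat_adjoint U) * (U * Y * mat_adjoint U) = U * (X * Y) * mat_adjoint U"
  using assms unitaryD(1)[OF assms(1)]
  by (simp add: unitary_cancel[OF assms(1), of _ n] assoc_mult_mat[of _ n n _ n _ n])

lemma unitary_conj_adjoint_conj:
  assumes "unitary n U" "X \<in> carrier_mat n n"
  shows "U * (mat_adjoint U * X * U) * mat_adjoint U = X"
  using assms unitaryD[OF assms(1)]
  by (simp add: unitary_cancel[OF assms(1), of _ n] assoc_mult_mat[of _ n n _ n _ n])

lemma normal_mat_unitary_conj: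
  assumes "unitary n U" "A \<in> carrier_mat n n" "normal_mat A"
  shows "normal_mat (U * A * mat_adjoint U)"
  using assms unitaryD(1)[OF assms(1)]
  by (simp add: normal_mat_def mat_adjoint_conj unitary_conj_mult)

lemma mult_minus_smult_distrib_mat:
  fixes U :: "'a :: comm_ring_1 mat"
  assumes "U \<in> carrier_mat m n" "X \<in> carrier_mat n n" "Y \<in> carrier_mat n n" "V \<in> carrier_mat n k"
  shows "U * (X - r \<cdot>\<^sub>m Y) * V = U * X * V - r \<cdot>\<^sub>m (U * Y * V)"
proof -
  have "U * (X - r \<cdot>\<^sub>m Y) = U * X - r \<cdot>\<^sub>m (U * Y)"
    using assms by (simp add: mult_minus_distrib_mat[of _ m n] mult_smult_distrib[of _ m n])
  with assms show ?thesis
    by (simp add: minus_mult_distrib_mat[of _ m n] mult_smult_assoc_mat[of _ m n])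
qed


section \<open>The Frobenius norm\<close>

lemma mat_trace_mult_comm:
  assumes "A \<in> carrier_mat n m" "B \<in> carrier_mat m n"
  shows "mat_trace (A * B) = mat_trace (B * A)"
proof -
  have "mat_trace (A * B) = (\<Sum>i<n. row A i \<bullet> col B i)"
    unfolding mat_trace_def using assms by (intro sum.cong) auto
  also have "\<dots> = (\<Sum>i<n. \<Sum>k\<in>{0..<m}. A $$ (i, k) * B $$ (k, i))"
    unfolding scalar_prod_def using assms by (intro sum.cong) auto
  also have "\<dots> = (\<Sum>k<m. \<Sum>i\<in>{0..<n}. B $$ (k, i) * A $$ (i, k))"
    by (subst sum.swap) (simp add: atLeast0LessThan mult.commute)
  also have "\<dots> = (\<Sum>k<m. row B k \<bullet> col A k)"
    unfolding scalar_prod_def using assms by (intro sum.cong) auto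
  also have "\<dots> = mat_trace (B * A)"
    unfolding mat_trace_def using assms by (intro sum.cong) auto
  finally show ?thesis .
qed

lemma index_mult_mat_adjoint_diag:
  fixes X :: "complex mat"
  shows "i < dim_row X \<Longrightarrow>
      (X * mat_adjoint X) $$ (i, i) = of_real (\<Sum>j<dim_col X. (cmod (X $$ (i, j)))\<^sup>2)"
    and "j < dim_col X \<Longrightarrow>
      (mat_adjoint X * X) $$ (j, j) = of_real (\<Sum>i<dim_row X. (cmod (X $$ (i, j)))\<^sup>2)"
proof -
  assume "i < dim_row X"
  then have "(X * mat_adjoint X) $$ (i, i) = (\<Sum>j<dim_col X. X $$ (i, j) * cnj (X $$ (i, j)))"
    by (simp add: scalar_prod_def atLeast0LessThan)
  then show "(X * mat_adjoint X) $$ (i, i) = of_real (\<Sum>j<dim_col X. (cmod (X $$ (i, j)))\<^sup>2)"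
    by (simp only: complex_norm_square of_real_sum)
next
  assume "j < dim_col X"
  then have "(mat_adjoint X * X) $$ (j, j) = (\<Sum>i<dim_row X. X $$ (i, j) * cnj (X $$ (i, j)))"
    by (simp add: scalar_prod_def atLeast0LessThan mult.commute)
  then show "(mat_adjoint X * X) $$ (j, j) = of_real (\<Sum>i<dim_row X. (cmod (X $$ (i, j)))\<^sup>2)"
    by (simp only: complex_norm_square of_real_sum)
qed

lemma frob_norm_square: "(frob_norm X)\<^sup>2 = (\<Sum>i<dim_row X. \<Sum>j<dim_col X. (cmod (X $$ (i, j)))\<^sup>2)"
proof -
  have "mat_trace (X * mat_adjoint X) = (\<Sum>i<dim_row X. of_real (\<Sum>j<dim_col X. (cmod (X $$ (i, j)))\<^sup>2))"
    unfolding mat_trace_def index_mult_mat(2) by (intro sum.cong refl index_mult_mat_adjoint_diag(1)) simp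
  also have "\<dots> = of_real (\<Sum>i<dim_row X. \<Sum>j<dim_col X. (cmod (X $$ (i, j)))\<^sup>2)"
    by (rule of_real_sum[symmetric])
  finally show ?thesis
    by (simp add: frob_norm_def sum_nonneg)
qed

lemma frob_norm_square_carrier:
  "X \<in> carrier_mat n m \<Longrightarrow> (frob_norm X)\<^sup>2 = (\<Sum>i<n. \<Sum>j<m. (cmod (X $$ (i, j)))\<^sup>2)"
  using frob_norm_square[of X] by auto

lemma mat_trace_unitary_conj:
  assumes "unitary n U" "Z \<in> carrier_mat n n"
  shows "mat_trace (U * Z * mat_adjoint U) = mat_trace Z"
proof -
  have "mat_trace (U * (Z * mat_adjoint U)) = mat_trace (Z * mat_adjoint U * U)"
    using assms unitaryD[OF assms(1)] by (intro mat_trace_mult_comm[of _ n n]) auto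
  with assms unitaryD[OF assms(1)] show ?thesis
    by (simp add: assoc_mult_mat[of _ n n _ n _ n])
qed

lemma frob_norm_unitary_conj:
  assumes "unitary n U" "X \<in> carrier_mat n n"
  shows "frob_norm (U * X * mat_adjoint U) = frob_norm X"
proof -
  have "(U * X * mat_adjoint U) * mat_adjoint (U * X * mat_adjoint U) = U * (X * mat_adjoint X) * mat_adjoint U"
    using assms unitaryD[OF assms(1)] by (simp add: mat_adjoint_conj unitary_conj_mult)
  then show ?thesis
    unfolding frob_norm_def using mat_trace_unitary_conj[OF assms(1), of "X * mat_adjoint X"] assms(2)
    by simp
qed


section \<open>The two largest entries of a list\<close>

definition sum_two_largest :: "'a :: {linorder, plus} list \<Rightarrow> 'a" where
  "sum_two_largest xs = rev (sort xs) ! 0 + rev (sort xs) ! 1"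

lemma rev_sort_nth_antimono:
  assumes "i \<le> j" "j < length xs"
  shows "rev (sort xs) ! j \<le> rev (sort xs) ! i"
  using assms by (simp add: rev_nth sorted_nth_mono)

lemma nth_add_nth_le_sum_two_largest:
  fixes xs :: "'a :: {linorder, ordered_ab_semigroup_add} list"
  assumes "i < length xs" "j < length xs" "i \<noteq> j"
  shows "xs ! i + xs ! j \<le> sum_two_largest xs"
proof -
  let ?L = "rev (sort xs)"
  have "mset xs = mset ?L"
    by simp
  then obtain p where p: "p permutes {..<length ?L}" "permute_list p ?L = xs"
    by (rule mset_eq_permutation)
  have len: "length ?L = length xs"
    by simp
  have nth: "xs ! k = ?L ! p k" if "k < length xs" for k
    using p that len by (metis permute_list_nth)
  have "p i < length xs" "p j < length xs"
    using p assms len by (metis lessThan_iff permutes_in_image)+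
  moreover have "p i \<noteq> p j"
    using p assms by (metis permutes_inj injD)
  ultimately have "?L ! p i + ?L ! p j \<le> ?L ! 0 + ?L ! 1"
  proof (cases "p i < p j")
    case True
    with \<open>p j < length xs\<close> show ?thesis
      by (intro add_mono rev_sort_nth_antimono) auto
  next
    case False
    with \<open>p i < length xs\<close> \<open>p i \<noteq> p j\<close> have "?L ! p i + ?L ! p j \<le> ?L ! 1 + ?L ! 0"
      by (intro add_mono rev_sort_nth_antimono) auto
    then show ?thesis
      by (simp only: add.commute[of "?L ! 1"])
  qed
  then show ?thesis
    unfolding sum_two_largest_def nth[OF assms(1)] nth[OF assms(2)] .
qed

lemma sum_two_largest_le_sum_list:
  fixes xs :: "'a :: {linorder, ordered_comm_monoid_add} list"
  assumes "\<forall>x \<in> set xs. 0 \<le> x" "2 \<le> length xs"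
  shows "sum_two_largest xs \<le> sum_list xs"
proof -
  obtain a b ys where L: "rev (sort xs) = a # b # ys"
    using assms(2) by (metis One_nat_def Suc_1 length_rev length_sort Suc_le_length_iff)
  have "0 \<le> sum_list ys"
    using assms(1) L by (intro sum_list_nonneg) (metis list.set_intros(2) set_rev set_sort)
  then have "sum_two_largest xs \<le> sum_list (rev (sort xs))"
    by (simp add: sum_two_largest_def L add_left_mono add_increasing2)
  also have "\<dots> = sum_list xs"
    by (metis mset_rev mset_sort sum_mset_sum_list)
  finally show ?thesis .
qed


lemma sum_two_largest_Cons_Cons_zeros:
  fixes a b :: "'a :: {linorder, ordered_comm_monoid_add}"
  assumes "0 \<le> a" "0 \<le> b"
  shows "sum_two_largest (a # b # replicate k 0) = a + b"
proof (rule antisym)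
  have "sum_list (replicate k (0 :: 'a)) = 0"
    by (induction k) simp_all
  then show "sum_two_largest (a # b # replicate k 0) \<le> a + b"
    using sum_two_largest_le_sum_list[of "a # b # replicate k 0"] assms by (simp add: add.assoc)
  show "a + b \<le> sum_two_largest (a # b # replicate k 0)"
    using nth_add_nth_le_sum_two_largest[of 0 "a # b # replicate k 0" 1] by simp
qed

section \<open>Singular values of a unitarily diagonalized matrix\<close>

lemma dim_mat_diag [simp]: "dim_row (mat_diag n d) = n" "dim_col (mat_diag n d) = n"
  by (simp_all add: mat_diag_def)

lemma index_mat_diag [simp]:
  "i < n \<Longrightarrow> j < n \<Longrightarrow> mat_diag n d $$ (i, j) = (if i = j then d i else 0)"
  by (simp add: mat_diag_def)

lemma proots_prod_linear_factors: "proots (\<Prod>a\<leftarrow>xs. [:- a, 1:]) = mset (xs :: 'a :: idom list)"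
proof (induction xs)
  case (Cons a xs)
  have "(\<Prod>a\<leftarrow>xs. [:- a, 1:]) \<noteq> 0"
    by auto
  then have "proots ([:- a, 1:] * (\<Prod>a\<leftarrow>xs. [:- a, 1:]))
      = proots [:- a, 1:] + proots (\<Prod>a\<leftarrow>xs. [:- a, 1:])"
    by (intro proots_mult) auto
  with Cons show ?case
    using proots_linear_factor[of "- a"] by simp
qed simp

lemma char_poly_mat_diag: "char_poly (mat_diag n e) = (\<Prod>a\<leftarrow>map e [0..<n]. [:- a, 1:])"
proof -
  have "char_poly (mat_diag n e) = (\<Prod>a\<leftarrow>diag_mat (mat_diag n e). [:- a, 1:])"
    by (rule char_poly_upper_triangular[of _ n]) (auto simp: upper_triangular_def mat_diag_def)
  also have "diag_mat (mat_diag n e) = map e [0..<n]"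
    by (simp add: diag_mat_def)
  finally show ?thesis .
qed

lemma singular_values_unitary_diag:
  assumes "unitary n U"
  shows "singular_values (U * mat_diag n d * mat_adjoint U)
       = map sqrt (rev (sort (map (\<lambda>i. (cmod (d i))\<^sup>2) [0..<n])))"
proof -
  note U = unitaryD[OF assms]
  define e where "e = (\<lambda>i. cnj (d i) * d i)"
  let ?A = "U * mat_diag n d * mat_adjoint U"
  have "mat_adjoint ?A * ?A = U * mat_diag n e * mat_adjoint U"
    using assms U by (simp add: mat_adjoint_conj unitary_conj_mult mat_adjoint_mat_diag e_def)
  moreover have "U * mat_diag n e * mat_adjoint U \<in> carrier_mat n n"
    using U by (intro mult_carrier_mat[of _ n n]) auto
  ultimately have "similar_mat_wit (mat_adjoint ?A * ?A) (mat_diag n e) U (mat_adjoint U)"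
    using U by (simp add: similar_mat_wit_def)
  then have "char_poly (mat_adjoint ?A * ?A) = char_poly (mat_diag n e)"
    by (intro char_poly_similar) (auto simp: similar_mat_def)
  then have "proots (char_poly (mat_adjoint ?A * ?A)) = mset (map e [0..<n])"
    by (simp only: char_poly_mat_diag proots_prod_linear_factors)
  moreover have "Re \<circ> e = (\<lambda>i. (cmod (d i))\<^sup>2)"
    by (simp add: e_def fun_eq_iff cmod_power2 flip: power2_eq_square)
  ultimately have "image_mset Re (proots (char_poly (mat_adjoint ?A * ?A)))
      = mset (map (\<lambda>i. (cmod (d i))\<^sup>2) [0..<n])"
    by (simp only: mset_map multiset.map_comp)
  then show ?thesis
    unfolding singular_values_def by (simp only: sorted_list_of_multiset_mset)
qed

lemma kyfan22_norm_square_unitary_diag: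
  assumes "unitary n U" "2 \<le> n"
  shows "(kyfan22_norm (U * mat_diag n d * mat_adjoint U))\<^sup>2
       = sum_two_largest (map (\<lambda>i. (cmod (d i))\<^sup>2) [0..<n])"
proof -
  let ?L = "rev (sort (map (\<lambda>i. (cmod (d i))\<^sup>2) [0..<n]))"
  have "0 \<le> ?L ! k" if "k < n" for k
    using that nth_mem[of k ?L] by auto
  with assms(2) show ?thesis
    by (simp add: kyfan22_norm_def singular_values_unitary_diag[OF assms(1)] sum_two_largest_def)
qed


section \<open>Spectral theorem for normal matrices\<close>

lemma cscalar_prod_self:
  fixes w :: "complex vec"
  shows "w \<bullet>c w = complex_of_real (\<Sum>k<dim_vec w. (cmod (w $ k))\<^sup>2)"
proof -
  have "w \<bullet>c w = (\<Sum>k\<in>{0..<dim_vec w}. w $ k * cnj (w $ k))"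
    unfolding scalar_prod_def by simp
  also have "\<dots> = (\<Sum>k<dim_vec w. complex_of_real ((cmod (w $ k))\<^sup>2))"
    by (simp only: complex_norm_square atLeast0LessThan)
  finally show ?thesis
    by simp
qed

lemma unitary_normalized_corthogonal:
  fixes ws :: "complex vec list"
  assumes ws: "set ws \<subseteq> carrier_vec n" "corthogonal ws" "length ws = n"
  defines "c \<equiv> \<lambda>i. complex_of_real (1 / sqrt (\<Sum>k<n. (cmod (ws ! i $ k))\<^sup>2))"
  shows "unitary n (mat n n (\<lambda>(k, i). c i * ws ! i $ k))"
proof -
  define s where "s i = (\<Sum>k<n. (cmod (ws ! i $ k))\<^sup>2)" for i
  define W where "W = mat n n (\<lambda>(k, i). c i * ws ! i $ k)"
  have wsc: "ws ! i \<in> carrier_vec n" if "i < n" for i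
    using ws that by (metis nth_mem subsetD)
  have self: "ws ! i \<bullet>c ws ! i = complex_of_real (s i)" if "i < n" for i
    using cscalar_prod_self[of "ws ! i"] wsc[OF that] by (simp add: s_def)
  have pos: "0 < s i" if "i < n" for i
  proof -
    have "s i \<noteq> 0"
      using corthogonalD[OF ws(2), of i i] ws(3) that self[OF that] by simp
    moreover have "0 \<le> s i"
      by (simp add: s_def sum_nonneg)
    ultimately show ?thesis
      by simp
  qed
  have norm1: "c i * c i * complex_of_real (s i) = 1" if "i < n" for i
  proof -
    have "1 / sqrt (s i) * (1 / sqrt (s i)) * s i = 1"
      using pos[OF that] by (simp add: field_simps)
    then show ?thesis
      unfolding c_def s_def[symmetric] by (simp only: of_real_mult[symmetric] of_real_1)
  qed
  have cnj_c: "cnj (c i) = c i" for i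
    by (simp add: c_def)
  have "(mat_adjoint W * W) $$ (i, j) = 1\<^sub>m n $$ (i, j)" if ij: "i < n" "j < n" for i j
  proof -
    have "(mat_adjoint W * W) $$ (i, j) = (\<Sum>k\<in>{0..<n}. cnj (W $$ (k, i)) * W $$ (k, j))"
      using ij by (simp add: W_def scalar_prod_def)
    also have "\<dots> = c i * c j * (ws ! j \<bullet>c ws ! i)"
      using ij wsc[OF ij(1)] by (simp add: W_def cnj_c scalar_prod_def sum_distrib_left algebra_simps)
    also have "\<dots> = 1\<^sub>m n $$ (i, j)"
      using ij corthogonalD[OF ws(2), of j i] ws(3) by (cases "i = j") (simp_all add: self norm1)
    finally show ?thesis .
  qed
  then have "mat_adjoint W * W = 1\<^sub>m n"
    by (intro eq_matI) (auto simp: W_def)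
  then show ?thesis
    by (simp add: unitary_def W_def)
qed

lemma unitary_with_first_column:
  fixes v :: "complex vec"
  assumes v: "v \<in> carrier_vec n" "v \<noteq> 0\<^sub>v n"
  shows "\<exists>W c. unitary n W \<and> (\<forall>k<n. W $$ (k, 0) = c * v $ k)"
proof -
  interpret cof_vec_space n "TYPE(complex)" .
  define b where "b = basis_completion v"
  from basis_completion[OF v, folded b_def]
  have b: "distinct b" "\<not> lin_dep (set b)" "set b \<subseteq> carrier_vec n" "hd b = v" "length b = n"
    by auto
  have "n \<noteq> 0"
    using v by (metis carrier_vecD eq_vecI index_zero_vec(2) less_nat_zero_code)
  with b obtain vs where bv: "b = v # vs"
    by (cases b) auto
  define ws where "ws = gram_schmidt n b"
  from gram_schmidt_result[OF b(3,1,2) refl, folded ws_def]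
  have ws: "set ws \<subseteq> carrier_vec n" "corthogonal ws" "length ws = n"
    by (auto simp: b(5))
  have "ws ! 0 = v"
    using gram_schmidt_hd[OF v(1), of vs] ws(3) \<open>n \<noteq> 0\<close>
    by (metis bv ws_def hd_conv_nth list.size(3))
  define c where "c = (\<lambda>i. complex_of_real (1 / sqrt (\<Sum>k<n. (cmod (ws ! i $ k))\<^sup>2)))"
  have "unitary n (mat n n (\<lambda>(k, i). c i * ws ! i $ k))"
    unfolding c_def by (rule unitary_normalized_corthogonal[OF ws])
  moreover have "\<forall>k<n. mat n n (\<lambda>(k, i). c i * ws ! i $ k) $$ (k, 0) = c 0 * v $ k"
    using \<open>ws ! 0 = v\<close> \<open>n \<noteq> 0\<close> by simp
  ultimately show ?thesis
    by blast
qed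

definition border_mat :: "'a :: zero \<Rightarrow> 'a mat \<Rightarrow> 'a mat" where
  "border_mat e X = mat (Suc (dim_row X)) (Suc (dim_col X))
     (\<lambda>(i, j). if i = 0 \<and> j = 0 then e else if i = 0 \<or> j = 0 then 0 else X $$ (i - 1, j - 1))"

lemma dim_border_mat [simp]:
  "dim_row (border_mat e X) = Suc (dim_row X)" "dim_col (border_mat e X) = Suc (dim_col X)"
  by (simp_all add: border_mat_def)

lemma border_mat_carrier [simp]:
  "X \<in> carrier_mat m k \<Longrightarrow> border_mat e X \<in> carrier_mat (Suc m) (Suc k)"
  unfolding carrier_mat_def by simp

lemma index_border_mat [simp]:
  "border_mat e X $$ (0, 0) = e"
  "j < dim_col X \<Longrightarrow> border_mat e X $$ (0, Suc j) = 0"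
  "i < dim_row X \<Longrightarrow> border_mat e X $$ (Suc i, 0) = 0"
  "i < dim_row X \<Longrightarrow> j < dim_col X \<Longrightarrow> border_mat e X $$ (Suc i, Suc j) = X $$ (i, j)"
  by (simp_all add: border_mat_def)

lemma border_mat_mult:
  fixes X :: "'a :: semiring_0 mat"
  assumes X: "X \<in> carrier_mat m k" and Y: "Y \<in> carrier_mat k l"
  shows "border_mat a X * border_mat b Y = border_mat (a * b) (X * Y)"
proof (rule eq_matI)
  fix i j assume "i < dim_row (border_mat (a * b) (X * Y))" "j < dim_col (border_mat (a * b) (X * Y))"
  with X Y have i: "i < Suc m" and j: "j < Suc l"
    by auto
  have "(border_mat a X * border_mat b Y) $$ (i, j)
      = border_mat a X $$ (i, 0) * border_mat b Y $$ (0, j)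
        + (\<Sum>h\<in>{0..<k}. border_mat a X $$ (i, Suc h) * border_mat b Y $$ (Suc h, j))"
    using X Y i j by (simp add: scalar_prod_def sum.atLeast0_lessThan_Suc_shift del: sum.op_ivl_Suc)
  also have "\<dots> = border_mat (a * b) (X * Y) $$ (i, j)"
    using X Y i j by (cases i; cases j) (auto simp: scalar_prod_def intro: sum.cong)
  finally show "(border_mat a X * border_mat b Y) $$ (i, j) = border_mat (a * b) (X * Y) $$ (i, j)" .
qed (use X Y in auto)

lemma mat_adjoint_border_mat: "mat_adjoint (border_mat e X) = border_mat (conjugate e) (mat_adjoint X)"
proof (rule eq_matI)
  fix i j assume "i < dim_row (border_mat (conjugate e) (mat_adjoint X))"
    "j < dim_col (border_mat (conjugate e) (mat_adjoint X))"
  then show "mat_adjoint (border_mat e X) $$ (i, j) = border_mat (conjugate e) (mat_adjoint X) $$ (i, j)"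
    by (cases i; cases j) auto
qed auto

lemma border_mat_one: "border_mat 1 (1\<^sub>m m) = 1\<^sub>m (Suc m)"
proof (rule eq_matI)
  fix i j assume "i < dim_row (1\<^sub>m (Suc m) :: 'a mat)" "j < dim_col (1\<^sub>m (Suc m) :: 'a mat)"
  then show "border_mat 1 (1\<^sub>m m) $$ (i, j) = (1\<^sub>m (Suc m) :: 'a :: {zero, one} mat) $$ (i, j)"
    by (cases i; cases j) auto
qed auto

lemma border_mat_mat_diag: "border_mat e (mat_diag m d) = mat_diag (Suc m) (case_nat e d)"
proof (rule eq_matI)
  fix i j assume "i < dim_row (mat_diag (Suc m) (case_nat e d))" "j < dim_col (mat_diag (Suc m) (case_nat e d))"
  then show "border_mat e (mat_diag m d) $$ (i, j) = mat_diag (Suc m) (case_nat e d) $$ (i, j)"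
    by (cases i; cases j) auto
qed auto

lemma border_mat_eq_imp_eq:
  assumes "border_mat a X = border_mat b Y" "X \<in> carrier_mat m k" "Y \<in> carrier_mat m k"
  shows "X = Y"
proof (rule eq_matI)
  fix i j assume "i < dim_row Y" "j < dim_col Y"
  moreover have "border_mat a X $$ (Suc i, Suc j) = border_mat b Y $$ (Suc i, Suc j)"
    using assms(1) by simp
  ultimately show "X $$ (i, j) = Y $$ (i, j)"
    using assms(2,3) by (simp add: carrier_matD)
qed (use assms in auto)

lemma border_mat_unitary_diag:
  assumes "U \<in> carrier_mat m m"
  shows "border_mat e (U * mat_diag m d * mat_adjoint U)
       = border_mat 1 U * mat_diag (Suc m) (case_nat e d) * mat_adjoint (border_mat 1 U)"
  using assms
  by (simp add: mat_adjoint_border_mat border_mat_mult[of _ m m _ m] flip: border_mat_mat_diag)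

lemma complex_mat_eigenvector_exists:
  fixes A :: "complex mat"
  assumes "A \<in> carrier_mat n n" "0 < n"
  shows "\<exists>e v. eigenvector A v e"
proof -
  obtain as where "char_poly A = (\<Prod>a\<leftarrow>as. [:- a, 1:])" "length as = n"
    using char_poly_factorized[OF assms(1)] by blast
  with assms(2) obtain e where "poly (char_poly A) e = 0"
    by (cases as) auto
  then have "eigenvalue A e"
    using eigenvalue_root_char_poly[OF assms(1)] by simp
  then show ?thesis
    by (auto simp: eigenvalue_def)
qed

lemma unitary_deflation_first_column:
  fixes A :: "complex mat"
  assumes A: "A \<in> carrier_mat n n" and v: "eigenvector A v e"
  shows "\<exists>V. unitary n V \<and> (\<forall>i<n. (V * A * mat_adjoint V) $$ (i, 0) = (if i = 0 then e else 0))"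
proof -
  have v: "v \<in> carrier_vec n" "v \<noteq> 0\<^sub>v n" "A *\<^sub>v v = e \<cdot>\<^sub>v v"
    using v A by (auto simp: eigenvector_def)
  then have "0 < n"
    by (metis carrier_vecD eq_vecI index_zero_vec(2) less_nat_zero_code neq0_conv)
  obtain W c where W: "unitary n W" and W0: "\<And>k. k < n \<Longrightarrow> W $$ (k, 0) = c * v $ k"
    using unitary_with_first_column[OF v(1,2)] by blast
  note Wc = unitaryD[OF W]
  have AW0: "(A * W) $$ (k, 0) = e * W $$ (k, 0)" if k: "k < n" for k
  proof -
    have "(A * W) $$ (k, 0) = (\<Sum>l\<in>{0..<n}. A $$ (k, l) * (c * v $ l))"
      using A Wc \<open>0 < n\<close> k by (simp add: scalar_prod_def W0)
    also have "\<dots> = c * (A *\<^sub>v v) $ k"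
      using A v(1) k by (simp add: scalar_prod_def sum_distrib_left algebra_simps)
    also have "\<dots> = e * W $$ (k, 0)"
      using v k by (simp add: W0)
    finally show ?thesis .
  qed
  have "(mat_adjoint W * A * W) $$ (i, 0) = (if i = 0 then e else 0)" if i: "i < n" for i
  proof -
    have "mat_adjoint W * A * W = mat_adjoint W * (A * W)"
      using A Wc by (simp add: assoc_mult_mat[of _ n n _ n _ n])
    then have "(mat_adjoint W * A * W) $$ (i, 0) = (\<Sum>k\<in>{0..<n}. cnj (W $$ (k, i)) * (A * W) $$ (k, 0))"
      using A Wc i \<open>0 < n\<close> by (simp add: scalar_prod_def)
    also have "\<dots> = (\<Sum>k\<in>{0..<n}. e * (cnj (W $$ (k, i)) * W $$ (k, 0)))"
      by (rule sum.cong[OF refl], subst AW0) auto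
    also have "\<dots> = e * (mat_adjoint W * W) $$ (i, 0)"
      using Wc(1) i \<open>0 < n\<close> by (simp add: scalar_prod_def sum_distrib_left)
    finally show ?thesis
      using Wc i \<open>0 < n\<close> by simp
  qed
  with unitary_adjoint[OF W] show ?thesis
    by (intro exI[of _ "mat_adjoint W"]) simp
qed

lemma normal_mat_first_column_imp_border:
  fixes A :: "complex mat"
  assumes A: "A \<in> carrier_mat (Suc m) (Suc m)" "normal_mat A"
    and col: "\<forall>i<Suc m. A $$ (i, 0) = (if i = 0 then e else 0)"
  shows "A = border_mat e (mat m m (\<lambda>(i, j). A $$ (Suc i, Suc j)))"
proof -
  have "complex_of_real (\<Sum>j<Suc m. (cmod (A $$ (0, j)))\<^sup>2) = (A * mat_adjoint A) $$ (0, 0)"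
    using A index_mult_mat_adjoint_diag(1)[of 0 A] by (simp add: carrier_matD)
  also have "\<dots> = (mat_adjoint A * A) $$ (0, 0)"
    using A by (simp add: normal_mat_def)
  also have "\<dots> = complex_of_real (\<Sum>i<Suc m. (cmod (A $$ (i, 0)))\<^sup>2)"
    using A index_mult_mat_adjoint_diag(2)[of 0 A] by (simp add: carrier_matD)
  finally have "(\<Sum>j<Suc m. (cmod (A $$ (0, j)))\<^sup>2) = (\<Sum>i<Suc m. (cmod (A $$ (i, 0)))\<^sup>2)"
    by (simp only: of_real_eq_iff)
  also have "\<dots> = (cmod (A $$ (0, 0)))\<^sup>2"
    using col by (simp add: sum.lessThan_Suc_shift del: sum.lessThan_Suc)
  finally have "(\<Sum>j<m. (cmod (A $$ (0, Suc j)))\<^sup>2) = 0"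
    by (simp add: sum.lessThan_Suc_shift del: sum.lessThan_Suc)
  then have row: "A $$ (0, Suc j) = 0" if "j < m" for j
    using that by (subst (asm) sum_nonneg_eq_0_iff) auto
  show ?thesis
  proof (rule eq_matI)
    fix i j assume "i < dim_row (border_mat e (mat m m (\<lambda>(i, j). A $$ (Suc i, Suc j))))"
      "j < dim_col (border_mat e (mat m m (\<lambda>(i, j). A $$ (Suc i, Suc j))))"
    then show "A $$ (i, j) = border_mat e (mat m m (\<lambda>(i, j). A $$ (Suc i, Suc j))) $$ (i, j)"
      using col row by (cases i; cases j) auto
  qed (use A in auto)
qed

lemma normal_mat_border_mat:
  assumes "X \<in> carrier_mat m m" "normal_mat (border_mat e X)"
  shows "normal_mat X"
proof -
  have "border_mat (e * cnj e) (X * mat_adjoint X) = border_mat (cnj e * e) (mat_adjoint X * X)"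
    using assms by (simp add: normal_mat_def mat_adjoint_border_mat border_mat_mult[of _ m m _ m])
  then have "X * mat_adjoint X = mat_adjoint X * X"
    by (rule border_mat_eq_imp_eq[of _ _ _ _ m m]) (use assms(1) in auto)
  then show ?thesis
    by (simp add: normal_mat_def)
qed

lemma unitary_border_mat:
  assumes "unitary m U"
  shows "unitary (Suc m) (border_mat 1 U)"
  using unitaryD[OF assms]
  by (simp add: unitary_def mat_adjoint_border_mat border_mat_mult[of _ m m _ m] border_mat_one)

theorem normal_mat_unitary_diagonalizable:
  fixes A :: "complex mat"
  assumes "A \<in> carrier_mat n n" "normal_mat A"
  shows "\<exists>U d. unitary n U \<and> A = U * mat_diag n d * mat_adjoint U"
  using assms
proof (induction n arbitrary: A)
  case 0
  then have "A = 1\<^sub>m 0 * mat_diag 0 d * mat_adjoint (1\<^sub>m 0)" for d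
    by (intro eq_matI) auto
  then show ?case
    using unitary_one by blast
next
  case (Suc m)
  obtain e v where "eigenvector A v e"
    using complex_mat_eigenvector_exists[OF Suc.prems(1)] by blast
  then obtain V where V: "unitary (Suc m) V"
    and col: "\<forall>i<Suc m. (V * A * mat_adjoint V) $$ (i, 0) = (if i = 0 then e else 0)"
    using unitary_deflation_first_column[OF Suc.prems(1)] by blast
  define X where "X = mat m m (\<lambda>(i, j). (V * A * mat_adjoint V) $$ (Suc i, Suc j))"
  have X: "X \<in> carrier_mat m m"
    by (simp add: X_def)
  have "normal_mat (V * A * mat_adjoint V)"
    using normal_mat_unitary_conj[OF V Suc.prems] .
  with col have VA: "V * A * mat_adjoint V = border_mat e X"
    unfolding X_def using V Suc.prems(1) unitaryD(1)[OF V]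
    by (intro normal_mat_first_column_imp_border) auto
  with \<open>normal_mat (V * A * mat_adjoint V)\<close> have "normal_mat X"
    using normal_mat_border_mat[OF X] by simp
  then obtain U d where U: "unitary m U" and XU: "X = U * mat_diag m d * mat_adjoint U"
    using Suc.IH[OF X] by blast
  define E where "E = mat_adjoint V * border_mat 1 U"
  have E: "unitary (Suc m) E"
    unfolding E_def by (intro unitary_mult unitary_adjoint V unitary_border_mat U)
  have B: "border_mat 1 U \<in> carrier_mat (Suc m) (Suc m)"
    using unitaryD(1)[OF U] by simp
  have "A = mat_adjoint V * (V * A * mat_adjoint V) * V"
    using unitary_conj_adjoint_conj[OF unitary_adjoint[OF V] Suc.prems(1)] by simp
  also have "V * A * mat_adjoint V
      = border_mat 1 U * mat_diag (Suc m) (case_nat e d) * mat_adjoint (border_mat 1 U)"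
    using VA XU border_mat_unitary_diag[OF unitaryD(1)[OF U]] by simp
  also have "mat_adjoint V * (border_mat 1 U * mat_diag (Suc m) (case_nat e d) * mat_adjoint (border_mat 1 U)) * V
      = E * mat_diag (Suc m) (case_nat e d) * mat_adjoint E"
    using unitaryD(1)[OF V] B
    by (simp add: E_def mat_adjoint_mult[of _ "Suc m" "Suc m" _ "Suc m"]
        assoc_mult_mat[of _ "Suc m" "Suc m" _ "Suc m" _ "Suc m"] mult_carrier_mat[of _ "Suc m" "Suc m"])
  finally have "A = E * mat_diag (Suc m) (case_nat e d) * mat_adjoint E" .
  with E show ?case
    by blast
qed


section \<open>The commutator estimate\<close>

lemma index_mat_diag_twisted_commutator:
  fixes C :: "'a :: comm_ring_1 mat"
  assumes "C \<in> carrier_mat n n" "i < n" "j < n"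
  shows "(mat_diag n d * C - r \<cdot>\<^sub>m (C * mat_diag n d)) $$ (i, j) = (d i - r * d j) * C $$ (i, j)"
  using assms by (simp add: mat_diag_mult_left[of _ n n] mat_diag_mult_right[of _ n n] algebra_simps)

lemma frob_norm_mat_diag_twisted_commutator:
  assumes "C \<in> carrier_mat n n"
  shows "(frob_norm (mat_diag n d * C - r \<cdot>\<^sub>m (C * mat_diag n d)))\<^sup>2
       = (\<Sum>i<n. \<Sum>j<n. (cmod (d i - r * d j))\<^sup>2 * (cmod (C $$ (i, j)))\<^sup>2)"
proof -
  have "mat_diag n d * C - r \<cdot>\<^sub>m (C * mat_diag n d) \<in> carrier_mat n n"
    using assms by (simp add: minus_carrier_mat)
  then show ?thesis
    by (subst frob_norm_square_carrier, assumption, intro sum.cong refl,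
        subst index_mat_diag_twisted_commutator[OF assms]) (auto simp: norm_mult power_mult_distrib)
qed

lemma cmod_diff_real_mult_square_le:
  "(cmod (a - complex_of_real r * b))\<^sup>2 \<le> (1 + r\<^sup>2) * ((cmod a)\<^sup>2 + (cmod b)\<^sup>2)"
proof -
  have "cmod (a - complex_of_real r * b) \<le> cmod a + \<bar>r\<bar> * cmod b"
    using norm_triangle_ineq4[of a "complex_of_real r * b"] by (simp add: norm_mult)
  then have "(cmod (a - complex_of_real r * b))\<^sup>2 \<le> (cmod a + \<bar>r\<bar> * cmod b)\<^sup>2"
    by (simp add: power_mono)
  also have "\<dots> = (1 + r\<^sup>2) * ((cmod a)\<^sup>2 + (cmod b)\<^sup>2) - (\<bar>r\<bar> * cmod a - cmod b)\<^sup>2"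
    by (simp add: power2_eq_square algebra_simps)
  finally show ?thesis
    by (smt (verit) zero_le_power2)
qed

lemma cmod_diff_real_mult_self_square_le:
  assumes "0 \<le> q"
  shows "(cmod (a - complex_of_real q * a))\<^sup>2 \<le> (1 + q\<^sup>2) * (cmod a)\<^sup>2"
proof -
  have "a - complex_of_real q * a = complex_of_real (1 - q) * a"
    by (simp add: algebra_simps)
  then have "(cmod (a - complex_of_real q * a))\<^sup>2 = (1 - q)\<^sup>2 * (cmod a)\<^sup>2"
    by (simp only: norm_mult norm_of_real power_mult_distrib power2_abs)
  also have "\<dots> \<le> (1 + q\<^sup>2) * (cmod a)\<^sup>2"
    using assms by (intro mult_right_mono) (auto simp: power2_eq_square algebra_simps)
  finally show ?thesis .
qed

lemma twisted_diff_square_le_sum_two_largest: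
  fixes d :: "nat \<Rightarrow> complex"
  assumes "0 \<le> q" "2 \<le> n" "i < n" "j < n"
  shows "(cmod (d i - complex_of_real q * d j))\<^sup>2
       \<le> (1 + q\<^sup>2) * sum_two_largest (map (\<lambda>k. (cmod (d k))\<^sup>2) [0..<n])"
proof -
  let ?S = "sum_two_largest (map (\<lambda>k. (cmod (d k))\<^sup>2) [0..<n])"
  have pair: "(cmod (d k))\<^sup>2 + (cmod (d l))\<^sup>2 \<le> ?S" if "k < n" "l < n" "k \<noteq> l" for k l
    using nth_add_nth_le_sum_two_largest[of k "map (\<lambda>k. (cmod (d k))\<^sup>2) [0..<n]" l] that by simp
  show ?thesis
  proof (cases "i = j")
    case True
    txt \<open>Only one eigenvalue occurs; a second index \<open>k \<noteq> i\<close>, available as \<open>n \<ge> 2\<close>,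
      supplies the other summand.\<close>
    define k where "k = (if i = 0 then 1 else 0 :: nat)"
    have "(cmod (d i))\<^sup>2 \<le> (cmod (d i))\<^sup>2 + (cmod (d k))\<^sup>2"
      by simp
    also have "\<dots> \<le> ?S"
      using assms by (intro pair) (auto simp: k_def)
    finally have "(1 + q\<^sup>2) * (cmod (d i))\<^sup>2 \<le> (1 + q\<^sup>2) * ?S"
      by (rule mult_left_mono) simp
    with True show ?thesis
      using cmod_diff_real_mult_self_square_le[OF assms(1), of "d i"] by simp
  next
    case False
    then have "(1 + q\<^sup>2) * ((cmod (d i))\<^sup>2 + (cmod (d j))\<^sup>2) \<le> (1 + q\<^sup>2) * ?S"
      using assms pair by (intro mult_left_mono) simp_all
    then show ?thesis
      using cmod_diff_real_mult_square_le[of "d i" q "d j"] by simp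
  qed
qed

lemma frob_norm_twisted_commutator_le:
  fixes A B :: "complex mat"
  assumes "2 \<le> n" "0 \<le> q" "A \<in> carrier_mat n n" "B \<in> carrier_mat n n" "normal_mat A"
  shows "(frob_norm (A * B - complex_of_real q \<cdot>\<^sub>m (B * A)))\<^sup>2
       \<le> (1 + q\<^sup>2) * (kyfan22_norm A)\<^sup>2 * (frob_norm B)\<^sup>2"
proof -
  obtain U d where U: "unitary n U" and AU: "A = U * mat_diag n d * mat_adjoint U"
    using normal_mat_unitary_diagonalizable[OF assms(3,5)] by blast
  note Uc = unitaryD[OF U]
  define C where "C = mat_adjoint U * B * U"
  define S where "S = sum_two_largest (map (\<lambda>k. (cmod (d k))\<^sup>2) [0..<n])"
  have C: "C \<in> carrier_mat n n"
    unfolding C_def using assms(4) Uc by (intro mult_carrier_mat[of _ n n]) auto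
  have BC: "B = U * C * mat_adjoint U"
    unfolding C_def by (rule unitary_conj_adjoint_conj[OF U assms(4), symmetric])
  have "A * B - complex_of_real q \<cdot>\<^sub>m (B * A)
      = U * (mat_diag n d * C) * mat_adjoint U - complex_of_real q \<cdot>\<^sub>m (U * (C * mat_diag n d) * mat_adjoint U)"
    using C by (simp add: AU BC unitary_conj_mult[OF U])
  also have "\<dots> = U * (mat_diag n d * C - complex_of_real q \<cdot>\<^sub>m (C * mat_diag n d)) * mat_adjoint U"
    by (rule mult_minus_smult_distrib_mat[symmetric]) (use C Uc in \<open>auto intro: mult_carrier_mat\<close>)
  finally have "A * B - complex_of_real q \<cdot>\<^sub>m (B * A)
      = U * (mat_diag n d * C - complex_of_real q \<cdot>\<^sub>m (C * mat_diag n d)) * mat_adjoint U" .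
  then have "(frob_norm (A * B - complex_of_real q \<cdot>\<^sub>m (B * A)))\<^sup>2
      = (\<Sum>i<n. \<Sum>j<n. (cmod (d i - complex_of_real q * d j))\<^sup>2 * (cmod (C $$ (i, j)))\<^sup>2)"
    using C by (simp add: frob_norm_unitary_conj[OF U] minus_carrier_mat
        frob_norm_mat_diag_twisted_commutator)
  also have "\<dots> \<le> (\<Sum>i<n. \<Sum>j<n. (1 + q\<^sup>2) * S * (cmod (C $$ (i, j)))\<^sup>2)"
    using assms(1,2) unfolding S_def
    by (intro sum_mono mult_right_mono twisted_diff_square_le_sum_two_largest) auto
  also have "\<dots> = (1 + q\<^sup>2) * S * (frob_norm C)\<^sup>2"
    using C by (simp add: frob_norm_square_carrier sum_distrib_left)
  also have "\<dots> = (1 + q\<^sup>2) * (kyfan22_norm A)\<^sup>2 * (frob_norm B)\<^sup>2"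
    using assms(1) C by (simp add: S_def AU BC kyfan22_norm_square_unitary_diag[OF U] frob_norm_unitary_conj[OF U])
  finally show ?thesis .
qed

lemma sum_sum_delta:
  fixes a b n m :: nat
  assumes "a < n" "b < m"
  shows "(\<Sum>i<n. \<Sum>j<m. if i = a \<and> j = b then c else 0) = (c :: 'a :: comm_monoid_add)"
proof -
  have "(\<Sum>j<m. if i = a \<and> j = b then c else 0) = (if i = a then c else 0)" for i
    using assms by (cases "i = a") simp_all
  with assms show ?thesis
    by simp
qed

lemma map_upt_two_nonzero:
  assumes "2 \<le> n" "\<And>k. 2 \<le> k \<Longrightarrow> f k = 0"
  shows "map f [0..<n] = f 0 # f 1 # replicate (n - 2) 0"
proof -
  have "[0..<n] = 0 # 1 # [2..<n]"
    using assms(1) by (simp add: upt_conv_Cons numeral_2_eq_2)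
  moreover have "map f [2..<n] = map (\<lambda>_. 0) [2..<n]"
    using assms(2) by (intro map_cong) auto
  ultimately show ?thesis
    by (simp add: map_replicate_const)
qed

lemma twisted_commutator_extremal:
  fixes q :: real
  assumes "2 \<le> n" "0 \<le> q"
  defines "d \<equiv> \<lambda>i. if i = 0 then 1 else if i = 1 then - complex_of_real q else 0"
    and "B \<equiv> mat n n (\<lambda>(i, j). if i = 0 \<and> j = 1 then 1 else 0)"
  shows "(frob_norm (mat_diag n d * B - complex_of_real q \<cdot>\<^sub>m (B * mat_diag n d)))\<^sup>2
       = (1 + q\<^sup>2) * (kyfan22_norm (mat_diag n d))\<^sup>2 * (frob_norm B)\<^sup>2"
proof -
  have B: "B \<in> carrier_mat n n"
    by (simp add: B_def)
  have "d 0 - complex_of_real q * d 1 = complex_of_real (1 + q\<^sup>2)"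
    by (simp add: d_def power2_eq_square)
  then have d01: "(cmod (d 0 - complex_of_real q * d 1))\<^sup>2 = (1 + q\<^sup>2)\<^sup>2"
    by (simp only: norm_of_real power2_abs)
  have "(frob_norm (mat_diag n d * B - complex_of_real q \<cdot>\<^sub>m (B * mat_diag n d)))\<^sup>2
      = (\<Sum>i<n. \<Sum>j<n. (cmod (d i - complex_of_real q * d j))\<^sup>2 * (cmod (B $$ (i, j)))\<^sup>2)"
    by (rule frob_norm_mat_diag_twisted_commutator[OF B])
  also have "\<dots> = (\<Sum>i<n. \<Sum>j<n. if i = 0 \<and> j = 1 then (1 + q\<^sup>2)\<^sup>2 else 0)"
    using d01 by (intro sum.cong refl) (auto simp: B_def)
  also have "\<dots> = (1 + q\<^sup>2)\<^sup>2"
    using assms(1) by (intro sum_sum_delta) auto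
  finally have lhs: "(frob_norm (mat_diag n d * B - complex_of_real q \<cdot>\<^sub>m (B * mat_diag n d)))\<^sup>2
      = (1 + q\<^sup>2)\<^sup>2" .
  have "(frob_norm B)\<^sup>2 = (\<Sum>i<n. \<Sum>j<n. if i = 0 \<and> j = 1 then 1 else 0)"
    unfolding frob_norm_square_carrier[OF B] by (intro sum.cong refl) (simp add: B_def)
  also have "\<dots> = 1"
    using assms(1) by (intro sum_sum_delta) auto
  finally have frob_B: "(frob_norm B)\<^sup>2 = 1" .
  have "map (\<lambda>k. (cmod (d k))\<^sup>2) [0..<n] = 1 # q\<^sup>2 # replicate (n - 2) 0"
    using assms(1) by (subst map_upt_two_nonzero) (simp_all add: d_def)
  then have "(kyfan22_norm (mat_diag n d))\<^sup>2 = 1 + q\<^sup>2"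
    using kyfan22_norm_square_unitary_diag[OF unitary_one assms(1), of d]
    by (simp add: sum_two_largest_Cons_Cons_zeros)
  with lhs frob_B show ?thesis
    by (simp add: power2_eq_square)
qed

theorem proposition1:
  fixes n :: nat and q :: real
  assumes "n \<ge> 2" and "q \<ge> 0"
  shows "(\<forall>A B. A \<in> carrier_mat n n \<longrightarrow> B \<in> carrier_mat n n \<longrightarrow> normal_mat A \<longrightarrow>
            (frob_norm (A * B - complex_of_real q \<cdot>\<^sub>m (B * A)))\<^sup>2
              \<le> (1 + q\<^sup>2) * (kyfan22_norm A)\<^sup>2 * (frob_norm B)\<^sup>2)
       \<and> (let A0 = mat n n (\<lambda>(i, j). if i = 0 \<and> j = 0 then 1
                                       else if i = 1 \<and> j = 1 then - complex_of_real q else 0);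
              B0 = mat n n (\<lambda>(i, j). if i = 0 \<and> j = 1 then 1 else 0)
          in (frob_norm (A0 * B0 - complex_of_real q \<cdot>\<^sub>m (B0 * A0)))\<^sup>2
              = (1 + q\<^sup>2) * (kyfan22_norm A0)\<^sup>2 * (frob_norm B0)\<^sup>2)"
proof -
  let ?d = "\<lambda>i. if i = 0 then 1 else if i = 1 then - complex_of_real q else (0 :: complex)"
  have "mat n n (\<lambda>(i, j). if i = 0 \<and> j = 0 then 1 else if i = 1 \<and> j = 1 then - complex_of_real q else 0)
      = mat_diag n ?d"
    by (rule eq_matI) auto
  then show ?thesis
    using frob_norm_twisted_commutator_le[OF assms] twisted_commutator_extremal[OF assms]
    by (simp add: Let_def)
qed

end
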